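(* Consider $N$ agents with $$\dot x_i=\sum_{j=1}^N\alpha_{ij}(y_j-y_i),\qquad y_i=\mathrm{sat}_i(x_i),\qquad i\in\mathcal V=\{1,\dots,N\},$$ where the constant weights $\alpha_{ij}=\alpha_{ji}\ge0$ define an undirected, connected graph, and the saturation levels $s_i>0$ may be equal (homogeneous) or different (heterogeneous). Assume the initial state $x(t_0)$ is not a consensus state, i.e. not all $x_i(t_0)$ are equal. Then the agents achieve consensus if and only if $$\frac1N\Big|\sum_{i=1}^N x_i(t_0)\Big|\le\min_{i\in\mathcal V}s_i .$$
   Context: $\mathrm{sat}_i(x)=\mathrm{sign}(x)\min\{|x|,s_i\}$. The graph is connected if for any two nodes there is a path of edges $\{i,j\}$ with $\alpha_{ij}>0$ joining them. Consensus is achieved if there exists $C\in\mathbb R$ with $\lim_{t\to\infty}x_i(t)=C$ for all $i\in\mathcal V$. *)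

theory Defs
  imports Complex_Main
begin

definition sat :: "real \<Rightarrow> real \<Rightarrow> real" where
  "sat s x = sgn x * min \<bar>x\<bar> s"

definition graph_connected :: "('i \<Rightarrow> 'i \<Rightarrow> real) \<Rightarrow> bool" where
  "graph_connected \<alpha> \<longleftrightarrow> (\<forall>i j. (\<lambda>a b. \<alpha> a b > 0)\<^sup>*\<^sup>* i j)"

definition is_solution ::
  "('i::finite \<Rightarrow> 'i \<Rightarrow> real) \<Rightarrow> ('i \<Rightarrow> real) \<Rightarrow> real \<Rightarrow> (real \<Rightarrow> 'i \<Rightarrow> real) \<Rightarrow> bool" where
  "is_solution \<alpha> s t0 x \<longleftrightarrow>
     (\<forall>t\<ge>t0. \<forall>i. ((\<lambda>\<tau>. x \<tau> i) has_real_derivative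
        (\<Sum>j\<in>UNIV. \<alpha> i j * (sat (s j) (x t j) - sat (s i) (x t i)))) (at t within {t0..}))"

definition achieves_consensus :: "(real \<Rightarrow> 'i \<Rightarrow> real) \<Rightarrow> bool" where
  "achieves_consensus x \<longleftrightarrow> (\<exists>C. \<forall>i. ((\<lambda>t. x t i) \<longlongrightarrow> C) at_top)"

end

theory Submission
  imports Defs "HOL-Analysis.Analysis"
begin

(*
  The flow conserves the sum of the states, so a consensus value can only be the
  initial mean C. The potential V = \<Sum>i \<Phi>_i(x_i), with \<Phi>_i a primitive of sat_i, is
  non-increasing with V' = -1/2 \<Sum>ij \<alpha>_ij (y_i - y_j)^2; since the outputs y_i are
  uniformly Lipschitz in time, each edge term must vanish asymptotically, and by connectivity
  all outputs merge. If |C| \<le> min s_i, outputs that are almost equal force the states to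
  be close to their mean, giving consensus. If |C| > min s_i, the outputs all tend to
  sat_i(C), which forces equal levels s_i = m; then near the limit every agent is saturated at
  the same value, the flow vanishes, and the set of times at which x = (C, ..., C) is
  nonempty, open and closed in [t0, \<infinity>), so it already holds at t0, contradicting the
  non-consensus initial state.
*)

lemma sat_eq_clamp: "0 \<le> s \<Longrightarrow> sat s v = max (- s) (min v s)"
  by (auto simp: sat_def sgn_if)

lemma abs_sat_le: "0 \<le> s \<Longrightarrow> \<bar>sat s v\<bar> \<le> s"
  by (auto simp: sat_eq_clamp)

lemma sat_lipschitz: "0 \<le> s \<Longrightarrow> \<bar>sat s u - sat s v\<bar> \<le> \<bar>u - v\<bar>"
  by (auto simp: sat_eq_clamp)

lemma sat_minus: "0 \<le> s \<Longrightarrow> sat s (- v) = - sat s v"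
  by (auto simp: sat_eq_clamp)

lemma sat_le_self_if_pos: "0 \<le> s \<Longrightarrow> 0 < sat s v \<Longrightarrow> sat s v \<le> v"
  by (auto simp: sat_eq_clamp)

lemma DERIV_pos_part_power2:
  "((\<lambda>u::real. (max u 0)\<^sup>2) has_real_derivative 2 * max u 0) (at u)"
proof -
  consider "u < 0" | "u = 0" | "u > 0" by linarith
  then show ?thesis
  proof cases
    case 1
    have "\<forall>\<^sub>F v in nhds u. (max v 0)\<^sup>2 = 0"
      using eventually_nhds_in_open[of "{..<0}" u] 1 by (auto elim!: eventually_mono)
    then show ?thesis
      using 1 DERIV_cong_ev[of u u "\<lambda>_. 0" _ 0] DERIV_const by fastforce
  next
    case 2
    have "\<forall>\<^sub>F v in at 0. max v 0 = ((max v 0)\<^sup>2 - (max 0 0)\<^sup>2) / (v - (0::real))"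
      unfolding eventually_at by (intro exI[of _ 1]) (auto simp: power2_eq_square max_def)
    moreover have "((\<lambda>v::real. max v 0) \<longlongrightarrow> 0) (at 0)"
      using tendsto_max[OF tendsto_ident_at tendsto_const, of 0 "0::real"] by simp
    ultimately have "((\<lambda>v. ((max v 0)\<^sup>2 - (max 0 0)\<^sup>2) / (v - 0)) \<longlongrightarrow> 0) (at (0::real))"
      using Lim_transform_eventually by fastforce
    then show ?thesis
      using 2 by (simp add: has_field_derivative_iff)
  next
    case 3
    have "\<forall>\<^sub>F v in nhds u. v\<^sup>2 = (max v 0)\<^sup>2"
      using eventually_nhds_in_open[of "{0<..}" u] 3 by (auto elim!: eventually_mono)
    moreover have "((\<lambda>v. v\<^sup>2) has_real_derivative 2 * u) (at u)"
      by (auto intro!: derivative_eq_intros)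
    ultimately show ?thesis
      using 3 DERIV_cong_ev[of u u "\<lambda>v. v\<^sup>2" "\<lambda>v. (max v 0)\<^sup>2"] by simp
  qed
qed

text \<open>A primitive of \<open>sat s\<close> vanishing at 0: \<open>v\<^sup>2 / 2\<close> on \<open>[-s, s]\<close>, continued linearly outside.\<close>
definition sat_potential :: "real \<Rightarrow> real \<Rightarrow> real" where
  "sat_potential s v = v\<^sup>2 / 2 - (max (v - s) 0)\<^sup>2 / 2 - (max (- v - s) 0)\<^sup>2 / 2"

lemma sat_potential_has_derivative:
  assumes "0 \<le> s"
  shows "(sat_potential s has_real_derivative sat s v) (at v)"
proof -
  have "(sat_potential s has_real_derivative
          v - max (v - s) 0 + max (- v - s) 0) (at v)"
    unfolding sat_potential_def [abs_def]
    by (rule derivative_eq_intros DERIV_chain2[OF DERIV_pos_part_power2] | simp)+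
  moreover have "v - max (v - s) 0 + max (- v - s) 0 = sat s v"
    using assms by (auto simp: sat_eq_clamp)
  ultimately show ?thesis by simp
qed

lemma sat_potential_nonneg:
  assumes "0 \<le> s"
  shows "0 \<le> sat_potential s v"
proof -
  consider "s \<le> v" | "v \<le> - s" | "\<bar>v\<bar> < s" by linarith
  then show ?thesis
  proof cases
    case 1
    then have "sat_potential s v = s * (v - s) + s\<^sup>2 / 2"
      using assms by (simp add: sat_potential_def power2_eq_square field_simps)
    then show ?thesis using 1 assms by simp
  next
    case 2
    then have "sat_potential s v = s * (- v - s) + s\<^sup>2 / 2"
      using assms by (simp add: sat_potential_def power2_eq_square field_simps)
    then show ?thesis using 2 assms by simp
  qed (simp add: sat_potential_def)
qed

lemma laplacian_sum_eq_zero: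
  fixes a :: "'i \<Rightarrow> 'i \<Rightarrow> 'a::comm_ring"
  assumes "\<And>i j. a i j = a j i"
  shows "(\<Sum>i\<in>I. \<Sum>j\<in>I. a i j * (y j - y i)) = 0"
proof -
  have "(\<Sum>i\<in>I. \<Sum>j\<in>I. a i j * y j) = (\<Sum>i\<in>I. \<Sum>j\<in>I. a i j * y i)"
    by (subst sum.swap) (simp add: assms)
  then show ?thesis
    by (simp add: right_diff_distrib sum_subtractf)
qed

lemma laplacian_quadratic_form:
  fixes a :: "'i \<Rightarrow> 'i \<Rightarrow> 'a::comm_ring_1"
  assumes "\<And>i j. a i j = a j i"
  shows "2 * (\<Sum>i\<in>I. y i * (\<Sum>j\<in>I. a i j * (y j - y i)))
           = - (\<Sum>i\<in>I. \<Sum>j\<in>I. a i j * (y i - y j)\<^sup>2)"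
proof -
  define S where "S = (\<Sum>i\<in>I. \<Sum>j\<in>I. a i j * (y i * (y j - y i)))"
  have lhs: "(\<Sum>i\<in>I. y i * (\<Sum>j\<in>I. a i j * (y j - y i))) = S"
    unfolding S_def by (simp add: sum_distrib_left mult.left_commute)
  have swapped: "S = (\<Sum>i\<in>I. \<Sum>j\<in>I. a i j * (y j * (y i - y j)))"
    unfolding S_def by (subst sum.swap) (simp add: assms)
  have pointwise: "a i j * (y i * (y j - y i)) + a i j * (y j * (y i - y j))
                   = - (a i j * (y i - y j)\<^sup>2)" for i j
    by (simp add: power2_eq_square algebra_simps)
  have "S + S = (\<Sum>i\<in>I. \<Sum>j\<in>I. a i j * (y i * (y j - y i)) + a i j * (y j * (y i - y j)))"
    by (subst (2) swapped) (simp only: S_def sum.distrib)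
  also have "\<dots> = - (\<Sum>i\<in>I. \<Sum>j\<in>I. a i j * (y i - y j)\<^sup>2)"
    by (simp only: pointwise sum_negf)
  finally show ?thesis
    by (simp only: lhs mult_2)
qed

lemma tendsto_zero_if_lipschitz_and_dissipative:
  fixes V e :: "real \<Rightarrow> real"
  assumes V_nonneg: "\<And>t. a < t \<Longrightarrow> 0 \<le> V t"
    and V_deriv: "\<And>t. a < t \<Longrightarrow> (V has_real_derivative V' t) (at t)"
    and dissipation: "\<And>t. a < t \<Longrightarrow> V' t \<le> - c * (e t)\<^sup>2"
    and c_pos: "0 < c" and L_pos: "0 < L"
    and lipschitz: "\<And>t u. a < t \<Longrightarrow> t \<le> u \<Longrightarrow> \<bar>e u - e t\<bar> \<le> L * (u - t)"
  shows "(e \<longlongrightarrow> 0) at_top"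
proof (rule ccontr)
  assume "\<not> (e \<longlongrightarrow> 0) at_top"
  then obtain \<eta> where \<eta>_pos: "0 < \<eta>" and often: "\<And>T. \<exists>t\<ge>T. \<eta> \<le> \<bar>e t\<bar>"
    by (auto simp: tendsto_iff eventually_at_top_linorder not_less dist_real_def)
  define h where "h = \<eta> / (2 * L)"
  define \<delta> where "\<delta> = c * (\<eta> / 2)\<^sup>2 * h"
  have h_pos: "0 < h" and \<delta>_pos: "0 < \<delta>"
    using \<eta>_pos c_pos L_pos by (simp_all add: h_def \<delta>_def)
  have V_antimono: "V u \<le> V t" if "a < t" "t \<le> u" for t u
  proof (rule DERIV_nonpos_imp_nonincreasing[OF \<open>t \<le> u\<close>])
    fix z assume "t \<le> z" "z \<le> u"
    with that have "a < z" by simp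
    moreover have "- c * (e z)\<^sup>2 \<le> 0" using c_pos by simp
    ultimately show "\<exists>y. (V has_real_derivative y) (at z) \<and> y \<le> 0"
      using V_deriv dissipation by (meson order.trans)
  qed
  have V_drop: "V (t + h) \<le> V t - \<delta>" if "a < t" "\<eta> \<le> \<bar>e t\<bar>" for t
  proof -
    \<comment> \<open>On \<open>[t, t + h]\<close> the Lipschitz bound keeps \<open>\<bar>e\<bar>\<close> above \<open>\<eta> / 2\<close>.\<close>
    have "V (t + h) + c * (\<eta> / 2)\<^sup>2 * (t + h) \<le> V t + c * (\<eta> / 2)\<^sup>2 * t"
    proof (rule DERIV_nonpos_imp_nonincreasing[where f = "\<lambda>u. V u + c * (\<eta> / 2)\<^sup>2 * u"])
      fix z assume z: "t \<le> z" "z \<le> t + h"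
      have "\<bar>e z - e t\<bar> \<le> \<eta> / 2"
        using lipschitz[of t z] mult_left_mono[of "z - t" h L] z that L_pos
        by (simp add: h_def)
      then have "\<bar>\<eta> / 2\<bar> \<le> \<bar>e z\<bar>"
        using that \<eta>_pos by arith
      then have "(\<eta> / 2)\<^sup>2 \<le> (e z)\<^sup>2"
        by (simp only: abs_le_square_iff)
      then have "c * (\<eta> / 2)\<^sup>2 \<le> c * (e z)\<^sup>2"
        using c_pos by simp
      then have "V' z + c * (\<eta> / 2)\<^sup>2 \<le> 0"
        using dissipation[of z] z that by simp
      moreover have "((\<lambda>u. V u + c * (\<eta> / 2)\<^sup>2 * u) has_real_derivative V' z + c * (\<eta> / 2)\<^sup>2) (at z)"
        using V_deriv[of z] z that by (auto intro!: derivative_eq_intros)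
      ultimately show "\<exists>y. ((\<lambda>u. V u + c * (\<eta> / 2)\<^sup>2 * u) has_real_derivative y) (at z) \<and> y \<le> 0"
        by blast
    qed (use h_pos in simp)
    then show ?thesis
      by (simp add: \<delta>_def algebra_simps)
  qed
  define m where "m = Inf (V ` {a + 1..})"
  have bdd: "bdd_below (V ` {a + 1..})"
    using V_nonneg by (intro bdd_belowI2[where m = 0]) simp
  obtain T where T: "a + 1 \<le> T" "V T < m + \<delta>"
    using cInf_less_iff[OF _ bdd, of "m + \<delta>"] \<delta>_pos by (auto simp: m_def)
  obtain t where t: "T \<le> t" "\<eta> \<le> \<bar>e t\<bar>"
    using often by blast
  have "m \<le> V (t + h)"
    unfolding m_def using T t h_pos by (intro cInf_lower[OF _ bdd]) simp
  also have "\<dots> \<le> V t - \<delta>"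
    using V_drop[of t] T t by simp
  also have "\<dots> \<le> V T - \<delta>"
    using V_antimono[of T t] T t by simp
  finally show False
    using T by simp
qed

lemma abs_deviation_from_mean_le:
  fixes x :: "'i::finite \<Rightarrow> real"
  assumes mean: "(\<Sum>j\<in>UNIV. x j) = real CARD('i) * C"
    and lower: "\<And>j. C - d \<le> x j"
  shows "\<bar>x i - C\<bar> \<le> real CARD('i) * d"
proof -
  have card_ge_1: "1 \<le> real CARD('i)"
    by (simp add: Suc_leI finite_UNIV_card_ge_0)
  have "x i - (C - d) \<le> (\<Sum>j\<in>UNIV. x j - (C - d))"
    using lower by (intro member_le_sum) auto
  also have "\<dots> = real CARD('i) * C - real CARD('i) * (C - d)"
    by (simp add: sum_subtractf mean)
  also have "\<dots> = real CARD('i) * d"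
    by (simp add: right_diff_distrib)
  finally have upper: "x i - C \<le> real CARD('i) * d - d" by simp
  have "0 \<le> real CARD('i) * d"
    using upper lower[of i] by linarith
  then have "0 \<le> d"
    using card_ge_1 by (simp add: zero_le_mult_iff)
  then have "d \<le> real CARD('i) * d"
    using card_ge_1 by (simp add: mult_le_cancel_right1)
  then show ?thesis
    using upper lower[of i] \<open>0 \<le> d\<close> by linarith
qed

lemma lower_bound_if_outputs_close:
  fixes x s :: "'i::finite \<Rightarrow> real"
  assumes s_pos: "\<And>i. 0 < s i"
    and mean: "(\<Sum>j\<in>UNIV. x j) = real CARD('i) * C"
    and C_le: "C \<le> Min (range s)"
    and close: "\<And>i j. \<bar>sat (s i) (x i) - sat (s j) (x j)\<bar> \<le> d"
    and d_less: "d < Min (range s)"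
    and no_neg_saturation: "\<And>k. - s k \<le> x k"
  shows "C - d \<le> x j"
proof (cases "\<exists>k. s k < x k")
  case True
  then obtain k where "s k < x k" by blast
  then have "sat (s k) (x k) = s k"
    using s_pos[of k] by (simp add: sat_eq_clamp)
  moreover have "Min (range s) \<le> s k" by simp
  ultimately have "Min (range s) - d \<le> sat (s j) (x j)"
    using close[of k j] by linarith
  moreover have "sat (s j) (x j) \<le> x j"
    using sat_le_self_if_pos[of "s j" "x j"] s_pos[of j] d_less calculation by linarith
  ultimately show ?thesis
    using C_le by linarith
next
  case False
  then have unsaturated: "sat (s i) (x i) = x i" for i
    using no_neg_saturation[of i] s_pos[of i] by (simp add: sat_eq_clamp not_less)
  \<comment> \<open>Some agent lies at or above the mean, and all the others are within \<open>d\<close> of it.\<close>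
  have "\<exists>k. C \<le> x k"
  proof (rule ccontr)
    assume "\<nexists>k. C \<le> x k"
    then have "(\<Sum>j\<in>UNIV. x j) < (\<Sum>j\<in>(UNIV :: 'i set). C)"
      by (intro sum_strict_mono) (auto simp: not_le)
    then show False
      using mean by simp
  qed
  then obtain k where "C \<le> x k" ..
  then show ?thesis
    using close[of k j] unsaturated[of k] unsaturated[of j] by linarith
qed

lemma abs_deviation_from_mean_le_if_outputs_close:
  fixes x s :: "'i::finite \<Rightarrow> real"
  assumes s_pos: "\<And>i. 0 < s i"
    and mean: "(\<Sum>j\<in>UNIV. x j) = real CARD('i) * C"
    and C_le: "\<bar>C\<bar> \<le> Min (range s)"
    and close: "\<And>i j. \<bar>sat (s i) (x i) - sat (s j) (x j)\<bar> \<le> d"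
    and d_less: "d < Min (range s)"
  shows "\<bar>x i - C\<bar> \<le> real CARD('i) * d"
proof -
  \<comment> \<open>Saturation at both ends at once would put two outputs \<open>2 * Min (range s) > d\<close> apart.\<close>
  consider "\<And>k. - s k \<le> x k" | "\<And>k. x k \<le> s k"
  proof (cases "\<forall>k. - s k \<le> x k")
    case False
    then obtain k where k: "x k < - s k" by (auto simp: not_le)
    have "x j \<le> s j" for j
    proof (rule ccontr)
      assume "\<not> x j \<le> s j"
      then have "sat (s j) (x j) - sat (s k) (x k) = s j + s k"
        using k s_pos[of j] s_pos[of k] by (simp add: sat_eq_clamp)
      moreover have "Min (range s) \<le> s j" "Min (range s) \<le> s k" by simp_all
      ultimately show False
        using close[of j k] d_less s_pos[of k] by linarith
    qed
    then show thesis using that by blast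
  qed blast
  then show ?thesis
  proof cases
    case 1
    have "C \<le> Min (range s)" using C_le by linarith
    then show ?thesis
      using lower_bound_if_outputs_close[OF s_pos mean _ close d_less 1]
      by (intro abs_deviation_from_mean_le[OF mean])
  next
    case 2
    have mean': "(\<Sum>j\<in>UNIV. - x j) = real CARD('i) * - C"
      using mean by (simp add: sum_negf)
    have close': "\<bar>sat (s i) (- x i) - sat (s j) (- x j)\<bar> \<le> d" for i j
      using close[of i j] s_pos[of i] s_pos[of j] by (simp add: sat_minus less_imp_le)
    have "- C \<le> Min (range s)" using C_le by linarith
    then have "\<bar>- x i - - C\<bar> \<le> real CARD('i) * d"
      using lower_bound_if_outputs_close[OF s_pos mean' _ close' d_less] 2
      by (intro abs_deviation_from_mean_le[OF mean']) simp_all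
    then show ?thesis by simp
  qed
qed

locale saturated_consensus =
  fixes \<alpha> :: "'i::finite \<Rightarrow> 'i \<Rightarrow> real"
    and s :: "'i \<Rightarrow> real"
    and t0 :: real
    and x :: "real \<Rightarrow> 'i \<Rightarrow> real"
  assumes symmetric: "\<And>i j. \<alpha> i j = \<alpha> j i"
    and weight_nonneg: "\<And>i j. 0 \<le> \<alpha> i j"
    and level_pos: "\<And>i. 0 < s i"
    and solution: "is_solution \<alpha> s t0 x"
begin

definition y :: "'i \<Rightarrow> real \<Rightarrow> real" where
  "y i t = sat (s i) (x t i)"

definition inflow :: "'i \<Rightarrow> real \<Rightarrow> real" where
  "inflow i t = (\<Sum>j\<in>UNIV. \<alpha> i j * (y j t - y i t))"

definition lyapunov :: "real \<Rightarrow> real" where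
  "lyapunov t = (\<Sum>i\<in>UNIV. sat_potential (s i) (x t i))"

lemma state_has_derivative_within:
  "t0 \<le> t \<Longrightarrow> ((\<lambda>\<tau>. x \<tau> i) has_real_derivative inflow i t) (at t within {t0..})"
  using solution by (simp add: is_solution_def inflow_def y_def)

lemma state_has_derivative:
  "t0 < t \<Longrightarrow> ((\<lambda>\<tau>. x \<tau> i) has_real_derivative inflow i t) (at t)"
  using state_has_derivative_within[of t i] at_within_interior[of t "{t0..}"] by simp

lemma continuous_on_state: "continuous_on {t0..} (\<lambda>\<tau>. x \<tau> i)"
  unfolding continuous_on_eq_continuous_within
  using state_has_derivative_within DERIV_continuous by blast

lemma sum_inflow_eq_zero: "(\<Sum>i\<in>UNIV. inflow i t) = 0"
  unfolding inflow_def by (rule laplacian_sum_eq_zero[OF symmetric])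

lemma sum_state_eq:
  assumes "t0 \<le> t"
  shows "(\<Sum>i\<in>UNIV. x t i) = (\<Sum>i\<in>UNIV. x t0 i)"
proof -
  have "\<exists>c. \<forall>u\<in>{t0..}. (\<Sum>i\<in>UNIV. x u i) = c"
  proof (rule has_field_derivative_zero_constant)
    fix u :: real assume "u \<in> {t0..}"
    then have "((\<lambda>\<tau>. \<Sum>i\<in>UNIV. x \<tau> i) has_real_derivative (\<Sum>i\<in>UNIV. inflow i u))
                 (at u within {t0..})"
      by (intro DERIV_sum state_has_derivative_within) simp
    then show "((\<lambda>\<tau>. \<Sum>i\<in>UNIV. x \<tau> i) has_real_derivative 0) (at u within {t0..})"
      by (simp add: sum_inflow_eq_zero)
  qed simp
  then show ?thesis
    using assms by force
qed

lemma state_constant_on_if_outputs_agree: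
  assumes "convex I" "I \<subseteq> {t0..}"
    and agree: "\<And>u j k. u \<in> I \<Longrightarrow> y j u = y k u"
  shows "\<exists>c. \<forall>u\<in>I. x u i = c"
proof (rule has_field_derivative_zero_constant[OF \<open>convex I\<close>])
  fix u assume "u \<in> I"
  then have "((\<lambda>\<tau>. x \<tau> i) has_real_derivative inflow i u) (at u within I)"
    using state_has_derivative_within[of u i] assms(2) by (auto intro: DERIV_subset)
  moreover have "inflow i u = 0"
    unfolding inflow_def using agree[OF \<open>u \<in> I\<close>, of _ i] by (simp add: sum.neutral)
  ultimately show "((\<lambda>\<tau>. x \<tau> i) has_real_derivative 0) (at u within I)"
    by simp
qed

lemma inflow_bounded: "\<exists>B. \<forall>i t. \<bar>inflow i t\<bar> \<le> B"
proof -
  define R where "R i = (\<Sum>j\<in>UNIV. \<alpha> i j * (s i + s j))" for i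
  have "\<bar>inflow i t\<bar> \<le> R i" for i t
  proof -
    have "\<bar>inflow i t\<bar> \<le> (\<Sum>j\<in>UNIV. \<bar>\<alpha> i j * (y j t - y i t)\<bar>)"
      unfolding inflow_def by (rule sum_abs)
    also have "\<dots> \<le> R i"
      unfolding R_def
    proof (rule sum_mono)
      fix j
      have "\<bar>y j t\<bar> \<le> s j" "\<bar>y i t\<bar> \<le> s i"
        using abs_sat_le level_pos less_imp_le unfolding y_def by blast+
      then have "\<bar>y j t - y i t\<bar> \<le> s i + s j"
        by linarith
      then show "\<bar>\<alpha> i j * (y j t - y i t)\<bar> \<le> \<alpha> i j * (s i + s j)"
        using weight_nonneg[of i j] by (simp add: abs_mult mult_left_mono)
    qed
    finally show ?thesis .
  qed
  then have "\<bar>inflow i t\<bar> \<le> Max (range R)" for i t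
    using order.trans[of _ "R i" "Max (range R)"] by simp
  then show ?thesis by blast
qed

lemma y_lipschitz:
  obtains L where "0 < L"
    and "\<And>i t u. t0 \<le> t \<Longrightarrow> t \<le> u \<Longrightarrow> \<bar>y i u - y i t\<bar> \<le> L * (u - t)"
proof -
  obtain B where B: "\<And>i t. \<bar>inflow i t\<bar> \<le> B"
    using inflow_bounded by blast
  have "\<bar>y i u - y i t\<bar> \<le> max B 1 * (u - t)" if "t0 \<le> t" "t \<le> u" for i t u
  proof -
    have "norm (x u i - x t i) \<le> max B 1 * norm (u - t)"
    proof (rule field_differentiable_bound[where S = "{t..u}" and f' = "inflow i"])
      fix \<tau> assume "\<tau> \<in> {t..u}"
      then show "((\<lambda>\<tau>. x \<tau> i) has_real_derivative inflow i \<tau>) (at \<tau> within {t..u})"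
        using state_has_derivative_within[of \<tau> i] \<open>t0 \<le> t\<close> by (auto intro: DERIV_subset)
    qed (use B[of i] \<open>t \<le> u\<close> in \<open>auto intro: max.coboundedI1\<close>)
    moreover have "\<bar>y i u - y i t\<bar> \<le> \<bar>x u i - x t i\<bar>"
      using sat_lipschitz level_pos less_imp_le unfolding y_def by blast
    ultimately show ?thesis
      using \<open>t \<le> u\<close> by simp
  qed
  then show thesis
    using that[of "max B 1"] by simp
qed

lemma lyapunov_has_derivative:
  assumes "t0 < t"
  shows "(lyapunov has_real_derivative
           - (\<Sum>i\<in>UNIV. \<Sum>j\<in>UNIV. \<alpha> i j * (y i t - y j t)\<^sup>2) / 2) (at t)"
proof -
  have "((\<lambda>\<tau>. sat_potential (s i) (x \<tau> i)) has_real_derivative y i t * inflow i t) (at t)" for i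
    using DERIV_chain2[OF sat_potential_has_derivative state_has_derivative[OF assms]]
      level_pos[of i] by (simp add: y_def)
  then have "(lyapunov has_real_derivative (\<Sum>i\<in>UNIV. y i t * inflow i t)) (at t)"
    unfolding lyapunov_def [abs_def] by (intro DERIV_sum) simp
  moreover have "2 * (\<Sum>i\<in>UNIV. y i t * inflow i t)
                   = - (\<Sum>i\<in>UNIV. \<Sum>j\<in>UNIV. \<alpha> i j * (y i t - y j t)\<^sup>2)"
    unfolding inflow_def by (rule laplacian_quadratic_form[OF symmetric])
  then have "(\<Sum>i\<in>UNIV. y i t * inflow i t)
               = - (\<Sum>i\<in>UNIV. \<Sum>j\<in>UNIV. \<alpha> i j * (y i t - y j t)\<^sup>2) / 2"
    by linarith
  ultimately show ?thesis
    by simp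
qed

lemma lyapunov_nonneg: "0 \<le> lyapunov t"
  unfolding lyapunov_def using level_pos by (simp add: sum_nonneg sat_potential_nonneg less_imp_le)

lemma edge_y_difference_tendsto_zero:
  assumes "0 < \<alpha> k l"
  shows "((\<lambda>t. y k t - y l t) \<longlongrightarrow> 0) at_top"
proof -
  obtain L where "0 < L" and L: "\<And>i t u. t0 \<le> t \<Longrightarrow> t \<le> u \<Longrightarrow> \<bar>y i u - y i t\<bar> \<le> L * (u - t)"
    using y_lipschitz by blast
  define Q where "Q t = (\<Sum>i\<in>UNIV. \<Sum>j\<in>UNIV. \<alpha> i j * (y i t - y j t)\<^sup>2)" for t
  have edge_term_le: "\<alpha> k l * (y k t - y l t)\<^sup>2 \<le> Q t" for t
  proof -
    have "\<alpha> k l * (y k t - y l t)\<^sup>2 \<le> (\<Sum>j\<in>UNIV. \<alpha> k j * (y k t - y j t)\<^sup>2)"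
      using weight_nonneg by (intro member_le_sum[where f = "\<lambda>j. \<alpha> k j * (y k t - y j t)\<^sup>2"]) auto
    also have "\<dots> \<le> Q t"
      unfolding Q_def using weight_nonneg
      by (intro member_le_sum[where f = "\<lambda>i. \<Sum>j\<in>UNIV. \<alpha> i j * (y i t - y j t)\<^sup>2"])
        (auto intro: sum_nonneg)
    finally show ?thesis .
  qed
  show ?thesis
  proof (rule tendsto_zero_if_lipschitz_and_dissipative
      [where V = lyapunov and V' = "\<lambda>t. - Q t / 2" and c = "\<alpha> k l / 2" and L = "2 * L"])
    show "(lyapunov has_real_derivative - Q t / 2) (at t)" if "t0 < t" for t
      unfolding Q_def using lyapunov_has_derivative[OF that] by simp
    show "- Q t / 2 \<le> - (\<alpha> k l / 2) * (y k t - y l t)\<^sup>2" for t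
      using edge_term_le[of t] by simp
    show "\<bar>(y k u - y l u) - (y k t - y l t)\<bar> \<le> 2 * L * (u - t)"
      if "t0 < t" "t \<le> u" for t u
      using L[of t u k] L[of t u l] that by simp
  qed (use assms \<open>0 < L\<close> lyapunov_nonneg in simp_all)
qed

lemma y_difference_tendsto_zero:
  assumes "graph_connected \<alpha>"
  shows "((\<lambda>t. y i t - y j t) \<longlongrightarrow> 0) at_top"
proof -
  have "(\<lambda>a b. 0 < \<alpha> a b)\<^sup>*\<^sup>* i j"
    using assms unfolding graph_connected_def by blast
  then show ?thesis
  proof (induction rule: rtranclp_induct)
    case (step k l)
    have "((\<lambda>t. (y i t - y k t) + (y k t - y l t)) \<longlongrightarrow> 0 + 0) at_top"
      using step.IH edge_y_difference_tendsto_zero[OF step.hyps(2)] by (rule tendsto_add)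
    then show ?case by simp
  qed simp
qed

lemma consensus_value_eq_mean:
  assumes lim: "\<And>i. ((\<lambda>t. x t i) \<longlongrightarrow> C) at_top"
  shows "C = (\<Sum>i\<in>UNIV. x t0 i) / real CARD('i)"
proof -
  have "((\<lambda>t. \<Sum>i\<in>UNIV. x t i) \<longlongrightarrow> (\<Sum>i\<in>(UNIV :: 'i set). C)) at_top"
    by (intro tendsto_sum lim)
  moreover have "((\<lambda>t. \<Sum>i\<in>UNIV. x t i) \<longlongrightarrow> (\<Sum>i\<in>UNIV. x t0 i)) at_top"
    by (intro tendsto_eventually eventually_mono[OF eventually_ge_at_top[of t0]] sum_state_eq)
  ultimately have "(\<Sum>i\<in>(UNIV :: 'i set). C) = (\<Sum>i\<in>UNIV. x t0 i)"
    by (rule tendsto_unique[OF trivial_limit_at_top_linorder])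
  then show ?thesis
    by (simp add: field_simps)
qed

lemma y_tendsto_sat:
  "((\<lambda>t. x t i) \<longlongrightarrow> C) at_top \<Longrightarrow> ((\<lambda>t. y i t) \<longlongrightarrow> sat (s i) C) at_top"
  unfolding y_def using level_pos[of i] by (simp add: sat_eq_clamp less_imp_le) (intro tendsto_intros)

lemma levels_eq_Min_if_consensus_value_beyond:
  assumes conn: "graph_connected \<alpha>"
    and lim: "\<And>i. ((\<lambda>t. x t i) \<longlongrightarrow> C) at_top"
    and beyond: "Min (range s) < \<bar>C\<bar>"
  shows "s j = Min (range s)"
proof -
  have "Min (range s) \<in> range s"
    by (rule Min_in) simp_all
  then obtain k where k: "s k = Min (range s)"
    by (metis rangeE)
  have "((\<lambda>t. y j t - y k t) \<longlongrightarrow> sat (s j) C - sat (s k) C) at_top"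
    by (intro tendsto_diff y_tendsto_sat lim)
  then have "sat (s j) C - sat (s k) C = 0"
    by (rule tendsto_unique[OF trivial_limit_at_top_linorder _ y_difference_tendsto_zero[OF conn]])
  moreover have "s k \<le> s j" "s k < \<bar>C\<bar>"
    using beyond by (simp_all add: k)
  ultimately have "s j = s k"
    using level_pos[of k] by (auto simp: sat_def sgn_if min_def split: if_splits)
  then show ?thesis
    by (simp add: k)
qed

lemma y_agree_near_saturated_value:
  assumes levels: "\<And>j. s j = m" and beyond: "m < \<bar>C\<bar>"
    and near: "\<And>i. \<bar>x u i - C\<bar> < \<bar>C\<bar> - m"
  shows "y j u = y k u"
proof -
  have "0 < m"
    using levels level_pos by metis
  have "y i u = sgn C * m" for i
  proof (cases "0 < C")
    case True
    then have "m < x u i"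
      using near[of i] by (simp add: abs_less_iff)
    then show ?thesis
      using True levels[of i] \<open>0 < m\<close> by (simp add: y_def sat_eq_clamp)
  next
    case False
    then have "x u i < - m"
      using near[of i] by (simp add: abs_less_iff)
    then show ?thesis
      using False beyond levels[of i] \<open>0 < m\<close> by (simp add: y_def sat_eq_clamp)
  qed
  then show ?thesis by simp
qed

lemma state_eventually_eq_consensus_value:
  assumes lim: "\<And>i. ((\<lambda>t. x t i) \<longlongrightarrow> C) at_top"
    and levels: "\<And>j. s j = m" and beyond: "m < \<bar>C\<bar>"
  obtains T where "t0 \<le> T" and "\<And>i. x T i = C"
proof -
  have "\<forall>\<^sub>F u in at_top. \<forall>i. \<bar>x u i - C\<bar> < \<bar>C\<bar> - m"
    using lim beyond
    by (intro eventually_all_finite allI) (auto simp: tendsto_iff dist_real_def)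
  then obtain T where T: "\<And>u i. T \<le> u \<Longrightarrow> \<bar>x u i - C\<bar> < \<bar>C\<bar> - m"
    unfolding eventually_at_top_linorder by blast
  have "x (max T t0) i = C" for i
  proof -
    obtain c where c: "\<forall>u\<in>{max T t0..}. x u i = c"
      using state_constant_on_if_outputs_agree[of "{max T t0..}" i]
        y_agree_near_saturated_value[OF levels beyond] T by force
    then have "((\<lambda>u. x u i) \<longlongrightarrow> c) at_top"
      by (intro tendsto_eventually eventually_mono[OF eventually_ge_at_top[of "max T t0"]]) simp
    then have "c = C"
      by (rule tendsto_unique[OF trivial_limit_at_top_linorder _ lim])
    then show ?thesis
      using c by simp
  qed
  then show thesis
    using that[of "max T t0"] by simp
qed

lemma state_eq_consensus_value_nearby:
  assumes levels: "\<And>j. s j = m" and beyond: "m < \<bar>C\<bar>"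
    and "t0 \<le> t" and at_t: "\<And>i. x t i = C"
  obtains e where "0 < e" and "\<And>u i. t0 \<le> u \<Longrightarrow> dist u t < e \<Longrightarrow> x u i = C"
proof -
  have "\<forall>\<^sub>F u in at t within {t0..}. \<forall>i. \<bar>x u i - C\<bar> < \<bar>C\<bar> - m"
  proof (intro eventually_all_finite allI)
    fix i
    have "((\<lambda>u. x u i) \<longlongrightarrow> x t i) (at t within {t0..})"
      using continuous_on_state[of i] \<open>t0 \<le> t\<close> by (simp add: continuous_on_def)
    then show "\<forall>\<^sub>F u in at t within {t0..}. \<bar>x u i - C\<bar> < \<bar>C\<bar> - m"
      using beyond at_t by (auto simp: tendsto_iff dist_real_def)
  qed
  then obtain e where "0 < e"
    and e: "\<And>u i. t0 \<le> u \<Longrightarrow> u \<noteq> t \<Longrightarrow> dist u t < e \<Longrightarrow> \<bar>x u i - C\<bar> < \<bar>C\<bar> - m"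
    unfolding eventually_at by auto
  define I where "I = {t0..} \<inter> ball t e"
  have near: "\<bar>x u i - C\<bar> < \<bar>C\<bar> - m" if "u \<in> I" for u i
    using that e[of u i] at_t beyond by (cases "u = t") (auto simp: I_def dist_commute)
  have "x u i = C" if "t0 \<le> u" "dist u t < e" for u i
  proof -
    obtain c where c: "\<forall>u\<in>I. x u i = c"
      using state_constant_on_if_outputs_agree[of I i] y_agree_near_saturated_value[OF levels beyond]
        near by (force simp: I_def convex_Int)
    have "t \<in> I" "u \<in> I"
      using \<open>0 < e\<close> \<open>t0 \<le> t\<close> that by (auto simp: I_def dist_commute)
    then show ?thesis
      using c at_t by metis
  qed
  then show thesis
    using that \<open>0 < e\<close> by blast
qed

lemma state_eq_consensus_value_if_beyond:
  assumes lim: "\<And>i. ((\<lambda>t. x t i) \<longlongrightarrow> C) at_top"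
    and levels: "\<And>j. s j = m" and beyond: "m < \<bar>C\<bar>"
    and "t0 \<le> t"
  shows "x t i = C"
proof -
  define E where "E = {t \<in> {t0..}. \<forall>i. x t i = C}"
  have "closedin (top_of_set {t0..}) E"
  proof -
    have "E = (\<Inter>i. {t \<in> {t0..}. x t i = C})"
      by (auto simp: E_def)
    then show ?thesis
      using continuous_closedin_preimage_constant[OF continuous_on_state] by auto
  qed
  moreover have "openin (top_of_set {t0..}) E"
    unfolding openin_euclidean_subtopology_iff
  proof (intro conjI ballI)
    fix t assume "t \<in> E"
    then obtain e where "0 < e" "\<And>u i. t0 \<le> u \<Longrightarrow> dist u t < e \<Longrightarrow> x u i = C"
      using state_eq_consensus_value_nearby[OF levels beyond] by (auto simp: E_def)
    then show "\<exists>e>0. \<forall>u\<in>{t0..}. dist u t < e \<longrightarrow> u \<in> E"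
      by (auto simp: E_def)
  qed (auto simp: E_def)
  moreover have "E \<noteq> {}"
    using state_eventually_eq_consensus_value[OF lim levels beyond] by (auto simp: E_def)
  ultimately have "E = {t0..}"
    using connected_clopen[of "{t0..}"] is_interval_connected[of "{t0..}"]
    by (auto simp: is_interval_ci)
  then show ?thesis
    using \<open>t0 \<le> t\<close> by (auto simp: E_def)
qed

lemma abs_consensus_value_le_Min_level:
  assumes conn: "graph_connected \<alpha>"
    and not_consensus: "\<exists>i j. x t0 i \<noteq> x t0 j"
    and lim: "\<And>i. ((\<lambda>t. x t i) \<longlongrightarrow> C) at_top"
  shows "\<bar>C\<bar> \<le> Min (range s)"
proof (rule ccontr)
  assume "\<not> \<bar>C\<bar> \<le> Min (range s)"
  then have beyond: "Min (range s) < \<bar>C\<bar>" by linarith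
  have "x t0 i = C" for i
    using state_eq_consensus_value_if_beyond[OF lim
        levels_eq_Min_if_consensus_value_beyond[OF conn lim beyond] beyond] by simp
  then show False
    using not_consensus by simp
qed

lemma state_tendsto_mean:
  assumes conn: "graph_connected \<alpha>"
    and C_def: "C = (\<Sum>i\<in>UNIV. x t0 i) / real CARD('i)"
    and C_le: "\<bar>C\<bar> \<le> Min (range s)"
  shows "((\<lambda>t. x t i) \<longlongrightarrow> C) at_top"
proof -
  define \<delta> where "\<delta> t = (\<Sum>a\<in>UNIV. \<Sum>b\<in>UNIV. \<bar>y a t - y b t\<bar>)" for t
  have \<delta>_tendsto: "(\<delta> \<longlongrightarrow> 0) at_top"
    unfolding \<delta>_def by (intro tendsto_null_sum tendsto_rabs_zero y_difference_tendsto_zero conn)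
  have y_close: "\<bar>y a t - y b t\<bar> \<le> \<delta> t" for a b t
  proof -
    have "\<bar>y a t - y b t\<bar> \<le> (\<Sum>b\<in>UNIV. \<bar>y a t - y b t\<bar>)"
      by (rule member_le_sum[where f = "\<lambda>b. \<bar>y a t - y b t\<bar>"]) simp_all
    also have "\<dots> \<le> \<delta> t"
      unfolding \<delta>_def by (rule member_le_sum[where f = "\<lambda>a. \<Sum>b\<in>UNIV. \<bar>y a t - y b t\<bar>"])
        (simp_all add: sum_nonneg)
    finally show ?thesis .
  qed
  have mean: "(\<Sum>j\<in>UNIV. x t j) = real CARD('i) * C" if "t0 \<le> t" for t
    using sum_state_eq[OF that] by (simp add: C_def)
  have "0 < Min (range s)"
    using level_pos by simp
  have "\<forall>\<^sub>F t in at_top. \<bar>x t i - C\<bar> \<le> real CARD('i) * \<delta> t"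
    using order_tendstoD(2)[OF \<delta>_tendsto \<open>0 < Min (range s)\<close>] eventually_ge_at_top[of t0]
  proof eventually_elim
    case (elim t)
    show ?case
      using y_close unfolding y_def
      by (intro abs_deviation_from_mean_le_if_outputs_close[OF level_pos mean[OF elim(2)] C_le])
        (simp_all add: elim(1))
  qed
  moreover have "((\<lambda>t. real CARD('i) * \<delta> t) \<longlongrightarrow> 0) at_top"
    using tendsto_mult_right_zero[OF \<delta>_tendsto] by simp
  ultimately have "((\<lambda>t. x t i - C) \<longlongrightarrow> 0) at_top"
    using Lim_null_comparison[of "\<lambda>t. x t i - C" "\<lambda>t. real CARD('i) * \<delta> t"] by simp
  then show ?thesis
    by (rule LIM_zero_cancel)
qed

end

theorem theorem1:
  fixes \<alpha> :: "'i::finite \<Rightarrow> 'i \<Rightarrow> real"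
    and s :: "'i \<Rightarrow> real"
    and t0 :: real
    and x :: "real \<Rightarrow> 'i \<Rightarrow> real"
  assumes sym: "\<And>i j. \<alpha> i j = \<alpha> j i"
    and nonneg: "\<And>i j. \<alpha> i j \<ge> 0"
    and conn: "graph_connected \<alpha>"
    and spos: "\<And>i. s i > 0"
    and sol: "is_solution \<alpha> s t0 x"
    and noncons: "\<exists>i j. x t0 i \<noteq> x t0 j"
  shows "achieves_consensus x \<longleftrightarrow>
           \<bar>\<Sum>i\<in>UNIV. x t0 i\<bar> / real (card (UNIV :: 'i set)) \<le> Min (range s)"
proof -
  interpret saturated_consensus \<alpha> s t0 x
    using sym nonneg spos sol by unfold_locales auto
  define C where "C = (\<Sum>i\<in>UNIV. x t0 i) / real CARD('i)"
  have "\<bar>\<Sum>i\<in>UNIV. x t0 i\<bar> / real CARD('i) = \<bar>C\<bar>"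
    by (simp add: C_def)
  moreover have "achieves_consensus x \<longleftrightarrow> \<bar>C\<bar> \<le> Min (range s)"
  proof
    assume "achieves_consensus x"
    then obtain C' where lim: "\<And>i. ((\<lambda>t. x t i) \<longlongrightarrow> C') at_top"
      unfolding achieves_consensus_def by blast
    then show "\<bar>C\<bar> \<le> Min (range s)"
      using abs_consensus_value_le_Min_level[OF conn noncons lim] consensus_value_eq_mean[OF lim]
      by (simp add: C_def)
  next
    assume "\<bar>C\<bar> \<le> Min (range s)"
    then show "achieves_consensus x"
      unfolding achieves_consensus_def using state_tendsto_mean[OF conn C_def] by blast
  qed
  ultimately show ?thesis
    by simp
qed

end
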